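(* Let $\varepsilon>0$ and $\delta\in(0,1)$. Define \[ n_1 = 1+\left\lfloor\frac{1}{\varepsilon}\ln\left(\frac{e^{\varepsilon}+2\delta-1}{(e^{\varepsilon}+1)\delta}\right)\right\rfloor, \] define $\pi_{\mathrm{opt}}(n)=\frac{e^{n\varepsilon}-1}{e^{\varepsilon}-1}\cdot\delta$ for integers $0\le n\le n_1$, and \[ n_2 = n_1 + \left\lfloor\frac{1}{\varepsilon}\ln\left(1+\frac{e^{\varepsilon}-1}{\delta}\left(1-\pi_{\mathrm{opt}}(n_1)\right)\right)\right\rfloor . \] For integers $n$ with $n_1<n\le n_2$, writing $m=n-n_1$, define \[ \pi_{\mathrm{opt}}(n)=\left(1-e^{-m\varepsilon}\right)\left(1+\frac{\delta}{e^{\varepsilon}-1}\right)+e^{-m\varepsilon}\pi_{\mathrm{opt}}(n_1), \] and define $\pi_{\mathrm{opt}}(n)=1$ for $n>n_2$. Then $\pi_{\mathrm{opt}}$ is an optimal partition selection primitive for $(\varepsilon,\delta)$-differential privacy.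
   Context: $\mathbb{N}=\{0,1,2,\dots\}$. A partition selection primitive is a function $\pi:\mathbb{N}\to[0,1]$ with $\pi(0)=0$; it is interpreted as: count the number $n$ of users in a partition and release (keep) the partition with probability $\pi(n)$, drop it otherwise. Let $\rho_\pi(n)$ be the random variable in $\{\mathrm{drop},\mathrm{keep}\}$ equal to keep with probability $\pi(n)$ and drop with probability $1-\pi(n)$. The primitive $\pi$ is $(\varepsilon,\delta)$-differentially private if for all $n,n'\in\mathbb{N}$ with $|n-n'|=1$ (adding or removing one user) and all $S\subseteq\{\mathrm{drop},\mathrm{keep}\}$, $\Pr[\rho_\pi(n)\in S]\le e^{\varepsilon}\Pr[\rho_\pi(n')\in S]+\delta$. A primitive $\pi_{\mathrm{opt}}$ is optimal for $(\varepsilon,\delta)$-DP if it is $(\varepsilon,\delta)$-differentially private and for every $(\varepsilon,\delta)$-differentially private partition selection primitive $\pi$ and every $n\in\mathbb{N}$, $\pi(n)\le\pi_{\mathrm{opt}}(n)$. *)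

theory Defs
  imports Complex_Main
begin

datatype outcome = Drop | Keep

definition is_primitive :: "(nat \<Rightarrow> real) \<Rightarrow> bool" where
  "is_primitive \<pi> \<longleftrightarrow> \<pi> 0 = 0 \<and> (\<forall>n. 0 \<le> \<pi> n \<and> \<pi> n \<le> 1)"

text \<open>Pr[rho_pi(n) in S]: keep with probability pi n, drop with probability 1 - pi n.\<close>
definition out_prob :: "(nat \<Rightarrow> real) \<Rightarrow> nat \<Rightarrow> outcome set \<Rightarrow> real" where
  "out_prob \<pi> n S = (\<Sum>r\<in>S. if r = Keep then \<pi> n else 1 - \<pi> n)"

definition is_dp :: "real \<Rightarrow> real \<Rightarrow> (nat \<Rightarrow> real) \<Rightarrow> bool" where
  "is_dp \<epsilon> \<delta> \<pi> \<longleftrightarrow> is_primitive \<pi> \<and>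
     (\<forall>n n'. \<bar>int n - int n'\<bar> = 1 \<longrightarrow>
        (\<forall>S. out_prob \<pi> n S \<le> exp \<epsilon> * out_prob \<pi> n' S + \<delta>))"

definition is_optimal :: "real \<Rightarrow> real \<Rightarrow> (nat \<Rightarrow> real) \<Rightarrow> bool" where
  "is_optimal \<epsilon> \<delta> \<pi>opt \<longleftrightarrow> is_dp \<epsilon> \<delta> \<pi>opt \<and>
     (\<forall>\<pi>. is_dp \<epsilon> \<delta> \<pi> \<longrightarrow> (\<forall>n. \<pi> n \<le> \<pi>opt n))"

definition n1 :: "real \<Rightarrow> real \<Rightarrow> int" where
  "n1 \<epsilon> \<delta> = 1 + \<lfloor>(1/\<epsilon>) * ln ((exp \<epsilon> + 2*\<delta> - 1) / ((exp \<epsilon> + 1) * \<delta>))\<rfloor>"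

definition pi_low :: "real \<Rightarrow> real \<Rightarrow> int \<Rightarrow> real" where
  "pi_low \<epsilon> \<delta> n = (exp (of_int n * \<epsilon>) - 1) / (exp \<epsilon> - 1) * \<delta>"

definition n2 :: "real \<Rightarrow> real \<Rightarrow> int" where
  "n2 \<epsilon> \<delta> = n1 \<epsilon> \<delta> + \<lfloor>(1/\<epsilon>) * ln (1 + (exp \<epsilon> - 1) / \<delta> * (1 - pi_low \<epsilon> \<delta> (n1 \<epsilon> \<delta>)))\<rfloor>"

definition pi_opt :: "real \<Rightarrow> real \<Rightarrow> nat \<Rightarrow> real" where
  "pi_opt \<epsilon> \<delta> n =
     (if int n \<le> n1 \<epsilon> \<delta> then pi_low \<epsilon> \<delta> (int n)
      else if int n \<le> n2 \<epsilon> \<delta> then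
        (let m = int n - n1 \<epsilon> \<delta> in
          (1 - exp (- (of_int m * \<epsilon>))) * (1 + \<delta> / (exp \<epsilon> - 1))
          + exp (- (of_int m * \<epsilon>)) * pi_low \<epsilon> \<delta> (n1 \<epsilon> \<delta>))
      else 1)"

end

theory Submission
  imports Defs
begin

(*
  For adjacent counts, (\<epsilon>,\<delta>)-DP amounts to four linear inequalities; two of them,
  from the events keep and drop, bound \<pi>(n+1) by e^\<epsilon> \<pi>(n) + \<delta> and by
  1 - (1 - \<pi>(n) - \<delta>) / e^\<epsilon>. So \<pi>(n+1) \<le> F(\<pi>(n)) for the increasing map
  F = dp_next_bound, and by induction every DP primitive lies below the orbit of 0 under F.
  This orbit is increasing, hence satisfies the two remaining inequalities and is itself DP.
  The closed form pi_opt is exactly this orbit: the keep bound is the smaller one while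
  \<pi>(n) \<le> (1 - \<delta>) / (e^\<epsilon> + 1), i.e. for n < n1; then the drop bound is the smaller
  one, and it stays at most 1 exactly for n < n2; from then on the cap 1 is attained.
*)

definition dp_next_bound :: "real \<Rightarrow> real \<Rightarrow> real \<Rightarrow> real" where
  "dp_next_bound \<epsilon> \<delta> x = min 1 (min (exp \<epsilon> * x + \<delta>) (1 - (1 - x - \<delta>) / exp \<epsilon>))"

lemma out_prob_eq:
  "out_prob p n S = (if Keep \<in> S then p n else 0) + (if Drop \<in> S then 1 - p n else 0)"
proof -
  have "S \<in> Pow {Drop, Keep}"
    using outcome.exhaust by blast
  then have "S = {} \<or> S = {Drop} \<or> S = {Keep} \<or> S = {Drop, Keep}"
    by (auto simp: Pow_insert)
  then show ?thesis
    unfolding out_prob_def by auto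
qed

lemma all_out_prob_le_iff:
  "(\<forall>S. out_prob p n S \<le> a * out_prob p n' S + \<delta>) \<longleftrightarrow>
     0 \<le> \<delta> \<and> 1 \<le> a + \<delta> \<and> p n \<le> a * p n' + \<delta> \<and> 1 - p n \<le> a * (1 - p n') + \<delta>"
proof
  assume "\<forall>S. out_prob p n S \<le> a * out_prob p n' S + \<delta>"
  then have "out_prob p n S \<le> a * out_prob p n' S + \<delta>" for S
    by blast
  from this[of "{}"] this[of "{Keep}"] this[of "{Drop}"] this[of UNIV]
  show "0 \<le> \<delta> \<and> 1 \<le> a + \<delta> \<and> p n \<le> a * p n' + \<delta> \<and> 1 - p n \<le> a * (1 - p n') + \<delta>"
    by (simp add: out_prob_eq algebra_simps)
next
  assume "0 \<le> \<delta> \<and> 1 \<le> a + \<delta> \<and> p n \<le> a * p n' + \<delta> \<and> 1 - p n \<le> a * (1 - p n') + \<delta>"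
  then show "\<forall>S. out_prob p n S \<le> a * out_prob p n' S + \<delta>"
    by (simp add: out_prob_eq algebra_simps)
qed

lemma is_dp_iff_adjacent:
  "is_dp \<epsilon> \<delta> p \<longleftrightarrow> is_primitive p \<and> 0 \<le> \<delta> \<and> 1 \<le> exp \<epsilon> + \<delta> \<and>
     (\<forall>n. p (Suc n) \<le> exp \<epsilon> * p n + \<delta> \<and> p n \<le> exp \<epsilon> * p (Suc n) + \<delta> \<and>
          1 - p n \<le> exp \<epsilon> * (1 - p (Suc n)) + \<delta> \<and> 1 - p (Suc n) \<le> exp \<epsilon> * (1 - p n) + \<delta>)"
proof -
  have adjacent: "\<bar>int n - int n'\<bar> = 1 \<longleftrightarrow> n' = Suc n \<or> n = Suc n'" for n n'
    by linarith
  show ?thesis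
    unfolding is_dp_def adjacent all_out_prob_le_iff by blast
qed

lemma le_dual_bound_iff:
  fixes a x y \<delta> :: real
  assumes "a > 0"
  shows "y \<le> 1 - (1 - x - \<delta>) / a \<longleftrightarrow> 1 - x \<le> a * (1 - y) + \<delta>"
  using assms by (simp add: field_simps)

lemma is_dp_imp_le_dp_next_bound:
  assumes "is_dp \<epsilon> \<delta> p"
  shows "p (Suc n) \<le> dp_next_bound \<epsilon> \<delta> (p n)"
  using assms le_dual_bound_iff[of "exp \<epsilon>"]
  unfolding is_dp_iff_adjacent is_primitive_def dp_next_bound_def by auto

lemma dp_next_bound_mono:
  assumes "x \<le> y"
  shows "dp_next_bound \<epsilon> \<delta> x \<le> dp_next_bound \<epsilon> \<delta> y"
proof -
  have "(1 - y - \<delta>) / exp \<epsilon> \<le> (1 - x - \<delta>) / exp \<epsilon>"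
    using assms by (simp add: divide_right_mono)
  then show ?thesis
    using assms unfolding dp_next_bound_def by (intro min.mono) auto
qed

lemma dp_next_bound_ge:
  assumes "0 \<le> \<epsilon>" "0 \<le> \<delta>" "0 \<le> x" "x \<le> 1"
  shows "x \<le> dp_next_bound \<epsilon> \<delta> x"
proof -
  have "1 * x \<le> exp \<epsilon> * x"
    using assms by (intro mult_right_mono) auto
  moreover have "1 * (1 - x) \<le> exp \<epsilon> * (1 - x)"
    using assms by (intro mult_right_mono) auto
  ultimately show ?thesis
    using assms le_dual_bound_iff[of "exp \<epsilon>" x x \<delta>] unfolding dp_next_bound_def by auto
qed

theorem is_optimal_if_iterates_dp_next_bound:
  assumes "0 \<le> \<epsilon>" "0 \<le> \<delta>"
    and p0: "p 0 = 0" and pSuc: "\<And>n. p (Suc n) = dp_next_bound \<epsilon> \<delta> (p n)"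
  shows "is_optimal \<epsilon> \<delta> p"
proof -
  have p_bounds: "0 \<le> p n \<and> p n \<le> 1" for n
  proof (induction n)
    case 0
    then show ?case using p0 by simp
  next
    case (Suc n)
    then show ?case
      using dp_next_bound_ge[OF assms(1,2)] unfolding pSuc dp_next_bound_def by fastforce
  qed
  have mono: "p n \<le> p (Suc n)" for n
    using dp_next_bound_ge[OF assms(1,2)] p_bounds pSuc by metis
  have "is_dp \<epsilon> \<delta> p"
  proof -
    have "1 \<le> exp \<epsilon> + \<delta>"
      using assms(1,2) by (smt (verit) one_le_exp_iff)
    moreover have "p (Suc n) \<le> exp \<epsilon> * p n + \<delta>" "1 - p n \<le> exp \<epsilon> * (1 - p (Suc n)) + \<delta>" for n
    proof -
      show "p (Suc n) \<le> exp \<epsilon> * p n + \<delta>"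
        using pSuc[of n] unfolding dp_next_bound_def by simp
      have "p (Suc n) \<le> 1 - (1 - p n - \<delta>) / exp \<epsilon>"
        using pSuc[of n] unfolding dp_next_bound_def by simp
      then show "1 - p n \<le> exp \<epsilon> * (1 - p (Suc n)) + \<delta>"
        using le_dual_bound_iff[of "exp \<epsilon>"] by simp
    qed
    moreover have "p n \<le> exp \<epsilon> * p (Suc n) + \<delta>" "1 - p (Suc n) \<le> exp \<epsilon> * (1 - p n) + \<delta>" for n
      using mono[of n] p_bounds[of n] p_bounds[of "Suc n"] assms(1,2)
      by (smt (verit) mult_le_cancel_right1 mult.commute one_le_exp_iff)+
    ultimately show ?thesis
      unfolding is_dp_iff_adjacent is_primitive_def using p0 p_bounds assms(2) by blast
  qed
  moreover have "q n \<le> p n" if "is_dp \<epsilon> \<delta> q" for q n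
  proof (induction n)
    case 0
    then show ?case using that p0 unfolding is_dp_def is_primitive_def by simp
  next
    case (Suc n)
    then show ?case
      using is_dp_imp_le_dp_next_bound[OF that] dp_next_bound_mono pSuc order_trans by metis
  qed
  ultimately show ?thesis
    unfolding is_optimal_def by blast
qed

lemma dp_next_bound_eq_linear:
  assumes "0 < \<epsilon>" "0 \<le> x" "x \<le> (1 - \<delta>) / (exp \<epsilon> + 1)"
  shows "dp_next_bound \<epsilon> \<delta> x = exp \<epsilon> * x + \<delta>"
proof -
  have "x * (exp \<epsilon> + 1) \<le> 1 - \<delta>"
    using assms by (simp add: le_divide_eq add_pos_pos)
  then have "(exp \<epsilon> - 1) * (x * (exp \<epsilon> + 1)) \<le> (exp \<epsilon> - 1) * (1 - \<delta>)"
    using assms(1) by (intro mult_left_mono) auto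
  then have "1 - x \<le> exp \<epsilon> * (1 - (exp \<epsilon> * x + \<delta>)) + \<delta>"
    by (simp add: algebra_simps)
  then have "exp \<epsilon> * x + \<delta> \<le> 1 - (1 - x - \<delta>) / exp \<epsilon>"
    by (simp add: le_dual_bound_iff)
  moreover have "exp \<epsilon> * x + \<delta> \<le> 1"
    using \<open>x * (exp \<epsilon> + 1) \<le> 1 - \<delta>\<close> assms(2) by (simp add: algebra_simps)
  ultimately show ?thesis
    unfolding dp_next_bound_def by simp
qed

lemma dp_next_bound_eq_dual:
  assumes "0 < \<epsilon>" "(1 - \<delta>) / (exp \<epsilon> + 1) \<le> x" "x + \<delta> \<le> 1"
  shows "dp_next_bound \<epsilon> \<delta> x = 1 - (1 - x - \<delta>) / exp \<epsilon>"
proof -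
  have "1 - \<delta> \<le> x * (exp \<epsilon> + 1)"
    using assms by (simp add: divide_le_eq add_pos_pos)
  then have "(exp \<epsilon> - 1) * (1 - \<delta>) \<le> (exp \<epsilon> - 1) * (x * (exp \<epsilon> + 1))"
    using assms(1) by (intro mult_left_mono) auto
  then have "1 - x - \<delta> \<ge> exp \<epsilon> * (1 - (exp \<epsilon> * x + \<delta>))"
    by (simp add: algebra_simps)
  then have "1 - (exp \<epsilon> * x + \<delta>) \<le> (1 - x - \<delta>) / exp \<epsilon>"
    by (simp add: pos_le_divide_eq mult.commute)
  then have "1 - (1 - x - \<delta>) / exp \<epsilon> \<le> exp \<epsilon> * x + \<delta>"
    by linarith
  moreover have "1 - (1 - x - \<delta>) / exp \<epsilon> \<le> 1"
    using assms(3) by simp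
  ultimately show ?thesis
    unfolding dp_next_bound_def by simp
qed

lemma dp_next_bound_eq_one:
  assumes "0 \<le> \<epsilon>" "0 \<le> x" "1 \<le> x + \<delta>"
  shows "dp_next_bound \<epsilon> \<delta> x = 1"
proof -
  have "1 * x \<le> exp \<epsilon> * x"
    using assms by (intro mult_right_mono) auto
  moreover have "(1 - x - \<delta>) / exp \<epsilon> \<le> 0"
    using assms(3) by (simp add: divide_nonpos_pos)
  ultimately show ?thesis
    using assms unfolding dp_next_bound_def by simp
qed

lemma exp_floor_ln_div_bounds:
  fixes \<epsilon> R :: real
  assumes "0 < \<epsilon>" "0 < R" "k = \<lfloor>(1 / \<epsilon>) * ln R\<rfloor>"
  shows "exp (of_int k * \<epsilon>) \<le> R" and "R < exp (of_int (k + 1) * \<epsilon>)"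
proof -
  have "of_int k \<le> ln R / \<epsilon>" "ln R / \<epsilon> < of_int (k + 1)"
    using assms(3) by simp_all
  then have "of_int k * \<epsilon> \<le> ln R" "ln R < of_int (k + 1) * \<epsilon>"
    using assms(1) by (simp_all add: pos_le_divide_eq pos_divide_less_eq)
  then show "exp (of_int k * \<epsilon>) \<le> R" and "R < exp (of_int (k + 1) * \<epsilon>)"
    using assms(2) by (metis exp_le_cancel_iff exp_ln, metis exp_less_cancel_iff exp_ln)
qed

definition pi_high :: "real \<Rightarrow> real \<Rightarrow> int \<Rightarrow> real" where
  "pi_high \<epsilon> \<delta> m = (1 - exp (- (of_int m * \<epsilon>))) * (1 + \<delta> / (exp \<epsilon> - 1))
     + exp (- (of_int m * \<epsilon>)) * pi_low \<epsilon> \<delta> (n1 \<epsilon> \<delta>)"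

context
  fixes \<epsilon> \<delta> :: real
  assumes eps_pos: "0 < \<epsilon>" and delta_pos: "0 < \<delta>" and delta_lt_1: "\<delta> < 1"
begin

lemma exp_eps_gt_1: "1 < exp \<epsilon>"
  using eps_pos by simp

lemma pi_low_add_one: "pi_low \<epsilon> \<delta> (k + 1) = exp \<epsilon> * pi_low \<epsilon> \<delta> k + \<delta>"
proof -
  have "exp (of_int (k + 1) * \<epsilon>) = exp (of_int k * \<epsilon>) * exp \<epsilon>"
    by (simp add: distrib_right exp_add)
  then show ?thesis
    using exp_eps_gt_1 unfolding pi_low_def by (simp add: field_simps)
qed

lemma pi_low_nonneg: "0 \<le> k \<Longrightarrow> 0 \<le> pi_low \<epsilon> \<delta> k"
  using eps_pos delta_pos exp_eps_gt_1 unfolding pi_low_def by simp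

lemma pi_low_le_crossover_iff:
  "pi_low \<epsilon> \<delta> k \<le> (1 - \<delta>) / (exp \<epsilon> + 1) \<longleftrightarrow>
     exp (of_int k * \<epsilon>) \<le> (exp \<epsilon> + 2 * \<delta> - 1) / ((exp \<epsilon> + 1) * \<delta>)"
  using exp_eps_gt_1 delta_pos unfolding pi_low_def
  by (simp add: field_simps add_pos_pos)

lemma pi_high_0: "pi_high \<epsilon> \<delta> 0 = pi_low \<epsilon> \<delta> (n1 \<epsilon> \<delta>)"
  unfolding pi_high_def by simp

lemma pi_high_add_one: "pi_high \<epsilon> \<delta> (m + 1) = 1 - (1 - pi_high \<epsilon> \<delta> m - \<delta>) / exp \<epsilon>"
proof -
  have "exp (- (of_int (m + 1) * \<epsilon>)) = exp (- (of_int m * \<epsilon>)) / exp \<epsilon>"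
    by (simp add: distrib_right exp_diff exp_minus field_simps)
  then show ?thesis
    using exp_eps_gt_1 unfolding pi_high_def by (simp add: field_simps)
qed

lemma pi_high_le_one_iff:
  "pi_high \<epsilon> \<delta> m \<le> 1 \<longleftrightarrow>
     exp (of_int m * \<epsilon>) \<le> 1 + (exp \<epsilon> - 1) / \<delta> * (1 - pi_low \<epsilon> \<delta> (n1 \<epsilon> \<delta>))"
proof -
  define t where "t = exp (of_int m * \<epsilon>)"
  define P where "P = pi_low \<epsilon> \<delta> (n1 \<epsilon> \<delta>)"
  have "t > 0"
    unfolding t_def by simp
  have "t * pi_high \<epsilon> \<delta> m = (t - 1) * (1 + \<delta> / (exp \<epsilon> - 1)) + P"
    using \<open>t > 0\<close> unfolding pi_high_def t_def P_def by (simp add: exp_minus field_simps)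
  moreover have "pi_high \<epsilon> \<delta> m \<le> 1 \<longleftrightarrow> t * pi_high \<epsilon> \<delta> m \<le> t"
    using \<open>t > 0\<close> by simp
  ultimately have "pi_high \<epsilon> \<delta> m \<le> 1 \<longleftrightarrow> (t - 1) * \<delta> / (exp \<epsilon> - 1) \<le> 1 - P"
    by (auto simp: algebra_simps)
  also have "\<dots> \<longleftrightarrow> t \<le> 1 + (exp \<epsilon> - 1) / \<delta> * (1 - P)"
    using exp_eps_gt_1 delta_pos by (simp add: field_simps)
  finally show ?thesis
    unfolding t_def P_def .
qed

lemma n1_bounds:
  shows "exp (of_int (n1 \<epsilon> \<delta> - 1) * \<epsilon>) \<le> (exp \<epsilon> + 2 * \<delta> - 1) / ((exp \<epsilon> + 1) * \<delta>)"
    and "(exp \<epsilon> + 2 * \<delta> - 1) / ((exp \<epsilon> + 1) * \<delta>) < exp (of_int (n1 \<epsilon> \<delta>) * \<epsilon>)"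
    and "1 \<le> n1 \<epsilon> \<delta>"
proof -
  define R where "R = (exp \<epsilon> + 2 * \<delta> - 1) / ((exp \<epsilon> + 1) * \<delta>)"
  have "(exp \<epsilon> - 1) * \<delta> \<le> (exp \<epsilon> - 1) * 1"
    using exp_eps_gt_1 delta_lt_1 by (intro mult_left_mono) auto
  then have "1 \<le> R"
    unfolding R_def using delta_pos by (simp add: le_divide_eq algebra_simps add_pos_pos)
  moreover have floor_eq: "n1 \<epsilon> \<delta> - 1 = \<lfloor>(1 / \<epsilon>) * ln R\<rfloor>"
    unfolding n1_def R_def by simp
  moreover have "0 \<le> \<lfloor>(1 / \<epsilon>) * ln R\<rfloor>"
    using eps_pos ln_ge_zero[OF \<open>1 \<le> R\<close>] by simp
  ultimately show "1 \<le> n1 \<epsilon> \<delta>"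
    by linarith
  show "exp (of_int (n1 \<epsilon> \<delta> - 1) * \<epsilon>) \<le> (exp \<epsilon> + 2 * \<delta> - 1) / ((exp \<epsilon> + 1) * \<delta>)"
      "(exp \<epsilon> + 2 * \<delta> - 1) / ((exp \<epsilon> + 1) * \<delta>) < exp (of_int (n1 \<epsilon> \<delta>) * \<epsilon>)"
    using exp_floor_ln_div_bounds[OF eps_pos _ floor_eq] \<open>1 \<le> R\<close> unfolding R_def by auto
qed

lemma pi_low_add_one_eq_dp_next_bound:
  assumes "0 \<le> k" "k < n1 \<epsilon> \<delta>"
  shows "pi_low \<epsilon> \<delta> (k + 1) = dp_next_bound \<epsilon> \<delta> (pi_low \<epsilon> \<delta> k)"
proof -
  have "exp (of_int k * \<epsilon>) \<le> exp (of_int (n1 \<epsilon> \<delta> - 1) * \<epsilon>)"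
    using assms eps_pos by simp
  then have "pi_low \<epsilon> \<delta> k \<le> (1 - \<delta>) / (exp \<epsilon> + 1)"
    unfolding pi_low_le_crossover_iff using n1_bounds(1) by (rule order_trans)
  then show ?thesis
    using dp_next_bound_eq_linear eps_pos pi_low_nonneg assms(1) pi_low_add_one by simp
qed

lemma pi_low_n1_le_1: "pi_low \<epsilon> \<delta> (n1 \<epsilon> \<delta>) \<le> 1"
  using pi_low_add_one_eq_dp_next_bound[of "n1 \<epsilon> \<delta> - 1"] n1_bounds(3)
  unfolding dp_next_bound_def by simp

lemma pi_low_n1_gt_crossover: "(1 - \<delta>) / (exp \<epsilon> + 1) < pi_low \<epsilon> \<delta> (n1 \<epsilon> \<delta>)"
  using n1_bounds(2) pi_low_le_crossover_iff not_le by metis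

lemma n2_bounds:
  shows "exp (of_int (n2 \<epsilon> \<delta> - n1 \<epsilon> \<delta>) * \<epsilon>)
           \<le> 1 + (exp \<epsilon> - 1) / \<delta> * (1 - pi_low \<epsilon> \<delta> (n1 \<epsilon> \<delta>))"
    and "1 + (exp \<epsilon> - 1) / \<delta> * (1 - pi_low \<epsilon> \<delta> (n1 \<epsilon> \<delta>))
           < exp (of_int (n2 \<epsilon> \<delta> - n1 \<epsilon> \<delta> + 1) * \<epsilon>)"
    and "n1 \<epsilon> \<delta> \<le> n2 \<epsilon> \<delta>"
proof -
  define R where "R = 1 + (exp \<epsilon> - 1) / \<delta> * (1 - pi_low \<epsilon> \<delta> (n1 \<epsilon> \<delta>))"
  have "1 \<le> R"
    unfolding R_def using pi_low_n1_le_1 exp_eps_gt_1 delta_pos by simp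
  moreover have floor_eq: "n2 \<epsilon> \<delta> - n1 \<epsilon> \<delta> = \<lfloor>(1 / \<epsilon>) * ln R\<rfloor>"
    unfolding n2_def R_def by simp
  moreover have "0 \<le> \<lfloor>(1 / \<epsilon>) * ln R\<rfloor>"
    using eps_pos ln_ge_zero[OF \<open>1 \<le> R\<close>] by simp
  ultimately show "n1 \<epsilon> \<delta> \<le> n2 \<epsilon> \<delta>"
    by linarith
  show "exp (of_int (n2 \<epsilon> \<delta> - n1 \<epsilon> \<delta>) * \<epsilon>) \<le> R"
      "R < exp (of_int (n2 \<epsilon> \<delta> - n1 \<epsilon> \<delta> + 1) * \<epsilon>)"
    using exp_floor_ln_div_bounds[OF eps_pos _ floor_eq] \<open>1 \<le> R\<close> by auto
qed

lemma pi_low_n1_le_pi_high: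
  assumes "0 \<le> m"
  shows "pi_low \<epsilon> \<delta> (n1 \<epsilon> \<delta>) \<le> pi_high \<epsilon> \<delta> m"
proof -
  define s where "s = exp (- (of_int m * \<epsilon>))"
  define L where "L = 1 + \<delta> / (exp \<epsilon> - 1)"
  define P where "P = pi_low \<epsilon> \<delta> (n1 \<epsilon> \<delta>)"
  have "0 < s" "s \<le> 1"
    using assms eps_pos unfolding s_def by auto
  moreover have "P \<le> L"
    using pi_low_n1_le_1 delta_pos exp_eps_gt_1 unfolding L_def P_def
    by (smt (verit) divide_pos_pos)
  ultimately have "s * (L - P) \<le> L - P"
    using mult_right_mono[of s 1 "L - P"] by simp
  moreover have "pi_high \<epsilon> \<delta> m = L - s * (L - P)"
    unfolding pi_high_def s_def L_def P_def by (simp add: algebra_simps)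
  ultimately show ?thesis
    unfolding P_def by simp
qed

lemma pi_high_add_one_eq_dp_next_bound:
  assumes "0 \<le> m" "m < n2 \<epsilon> \<delta> - n1 \<epsilon> \<delta>"
  shows "pi_high \<epsilon> \<delta> (m + 1) = dp_next_bound \<epsilon> \<delta> (pi_high \<epsilon> \<delta> m)"
proof -
  have "exp (of_int (m + 1) * \<epsilon>) \<le> exp (of_int (n2 \<epsilon> \<delta> - n1 \<epsilon> \<delta>) * \<epsilon>)"
    using assms eps_pos by simp
  then have "pi_high \<epsilon> \<delta> (m + 1) \<le> 1"
    unfolding pi_high_le_one_iff using n2_bounds(1) by (rule order_trans)
  then have "pi_high \<epsilon> \<delta> m + \<delta> \<le> 1"
    using pi_high_add_one exp_eps_gt_1 by (simp add: zero_le_divide_iff)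
  moreover have "(1 - \<delta>) / (exp \<epsilon> + 1) \<le> pi_high \<epsilon> \<delta> m"
    using pi_low_n1_gt_crossover pi_low_n1_le_pi_high[OF assms(1)] by linarith
  ultimately show ?thesis
    using dp_next_bound_eq_dual eps_pos pi_high_add_one by simp
qed

lemma dp_next_bound_pi_high_n2: "dp_next_bound \<epsilon> \<delta> (pi_high \<epsilon> \<delta> (n2 \<epsilon> \<delta> - n1 \<epsilon> \<delta>)) = 1"
proof -
  let ?y = "pi_high \<epsilon> \<delta> (n2 \<epsilon> \<delta> - n1 \<epsilon> \<delta>)"
  have "1 < pi_high \<epsilon> \<delta> (n2 \<epsilon> \<delta> - n1 \<epsilon> \<delta> + 1)"
    using n2_bounds(2) pi_high_le_one_iff not_le by metis
  then have "1 \<le> ?y + \<delta>"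
    using pi_high_add_one exp_eps_gt_1 by (simp add: divide_less_0_iff)
  moreover have "0 \<le> pi_low \<epsilon> \<delta> (n1 \<epsilon> \<delta>)"
    using pi_low_nonneg n1_bounds(3) by simp
  then have "0 \<le> ?y"
    using pi_low_n1_le_pi_high[of "n2 \<epsilon> \<delta> - n1 \<epsilon> \<delta>"] n2_bounds(3) by simp
  ultimately show ?thesis
    using dp_next_bound_eq_one eps_pos by simp
qed

lemma pi_opt_eq_pi_high:
  assumes "n1 \<epsilon> \<delta> \<le> int n" "int n \<le> n2 \<epsilon> \<delta>"
  shows "pi_opt \<epsilon> \<delta> n = pi_high \<epsilon> \<delta> (int n - n1 \<epsilon> \<delta>)"
proof (cases "int n = n1 \<epsilon> \<delta>")
  case True
  then show ?thesis
    using pi_high_0 unfolding pi_opt_def by simp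
next
  case False
  then show ?thesis
    using assms unfolding pi_opt_def pi_high_def Let_def by simp
qed

lemma pi_opt_0: "pi_opt \<epsilon> \<delta> 0 = 0"
  using n1_bounds(3) unfolding pi_opt_def pi_low_def by simp

lemma pi_opt_Suc: "pi_opt \<epsilon> \<delta> (Suc n) = dp_next_bound \<epsilon> \<delta> (pi_opt \<epsilon> \<delta> n)"
proof -
  consider "int n < n1 \<epsilon> \<delta>" | "n1 \<epsilon> \<delta> \<le> int n" "int n < n2 \<epsilon> \<delta>"
    | "int n = n2 \<epsilon> \<delta>" | "n2 \<epsilon> \<delta> < int n"
    by linarith
  then show ?thesis
  proof cases
    case 1
    then show ?thesis
      using pi_low_add_one_eq_dp_next_bound[of "int n"] unfolding pi_opt_def by (simp add: add.commute)
  next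
    case 2
    then show ?thesis
      using pi_high_add_one_eq_dp_next_bound[of "int n - n1 \<epsilon> \<delta>"]
        pi_opt_eq_pi_high[of n] pi_opt_eq_pi_high[of "Suc n"] by (simp add: algebra_simps)
  next
    case 3
    then show ?thesis
      using dp_next_bound_pi_high_n2 pi_opt_eq_pi_high[of n] n2_bounds(3)
      unfolding pi_opt_def by simp
  next
    case 4
    then show ?thesis
      using dp_next_bound_eq_one[of \<epsilon> 1 \<delta>] eps_pos delta_pos n2_bounds(3)
      unfolding pi_opt_def by simp
  qed
qed

end

theorem theorem1:
  fixes \<epsilon> \<delta> :: real
  assumes "\<epsilon> > 0" and "0 < \<delta>" and "\<delta> < 1"
  shows "is_optimal \<epsilon> \<delta> (pi_opt \<epsilon> \<delta>)"
  using assms by (intro is_optimal_if_iterates_dp_next_bound pi_opt_0 pi_opt_Suc) auto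

end
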